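(* Assume the setup in the context, with the fine-tuning regime and local smoothness with radius $r\ge 2\sqrt{C}$. Let $0<\epsilon\le 1$ be such that $|\langle\tau_i,\tau_j\rangle|\le\epsilon\|\tau_i\|\|\tau_j\|$ for all $i\neq j$. Let $\alpha_1,\dots,\alpha_T\ge 0$ with $\sum_{i=1}^T\alpha_i=1$, and set $\theta^T_{\mathrm{Add}}=\theta_0+\sum_{i=1}^T\alpha_i\tau_i$. Then for every $i\in[T]$, $$\mathcal{L}_i(\theta^T_{\mathrm{Add}})-\mathcal{L}_i(\theta_i)\le L_iC(1+\epsilon).$$
   Context: Setup: $\theta_0\in\mathbb{R}^d$ is a pretrained parameter vector; $\theta_1,\dots,\theta_T\in\mathbb{R}^d$ are fine-tuned parameters and $\tau_i:=\theta_i-\theta_0$ are task vectors. For each task $i$, $\mathcal{L}_i:\mathbb{R}^d\to\mathbb{R}$ is a differentiable loss (population risk). Norms are Euclidean. Fine-tuning regime: $\nabla\mathcal{L}_i(\theta_i)=0$ for all $i\in[T]$, and there is $C>0$ with $\|\tau_i\|^2\le C$ for all $i$. Local smoothness with radius $r>0$: for each $i$ there is $L_i\ge 0$ such that for all $\theta$ with $\|\theta-\theta_i\|\le r$, $\big|\mathcal{L}_i(\theta)-\mathcal{L}_i(\theta_i)-\langle\theta-\theta_i,\nabla\mathcal{L}_i(\theta_i)\rangle\big|\le\frac{L_i}{2}\|\theta-\theta_i\|^2$. *)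

theory Defs
  imports "HOL-Analysis.Analysis"
begin

end

theory Submission
  imports Defs
begin

(* The merged model is theta_0 + s with s a convex combination of task vectors, so
   ||s||^2 <= C and, by incoherence, <s, tau_i> >= -eps C.  Hence the displacement
   s - tau_i from theta_i has squared norm at most 2C(1 + eps) and length at most
   2 sqrt C <= r; at the stationary point theta_i the local smoothness bound then
   reads L_i(theta_Add) - L_i(theta_i) <= L_i/2 ||s - tau_i||^2 <= L_i C (1 + eps). *)

lemma norm_convex_combination_le:
  fixes v :: "'i \<Rightarrow> 'a::real_normed_vector"
  assumes "\<And>j. j \<in> A \<Longrightarrow> \<alpha> j \<ge> 0" and "sum \<alpha> A = 1"
    and "\<And>j. j \<in> A \<Longrightarrow> norm (v j) \<le> B"
  shows "norm (\<Sum>j\<in>A. \<alpha> j *\<^sub>R v j) \<le> B"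
proof -
  have "norm (\<Sum>j\<in>A. \<alpha> j *\<^sub>R v j) \<le> (\<Sum>j\<in>A. norm (\<alpha> j *\<^sub>R v j))"
    by (rule norm_sum)
  also have "\<dots> \<le> (\<Sum>j\<in>A. \<alpha> j * B)"
    by (rule sum_mono) (simp add: assms(1,3) mult_left_mono)
  also have "\<dots> = B"
    using assms(2) by (simp add: sum_distrib_right[symmetric])
  finally show ?thesis .
qed

lemma inner_convex_combination_ge:
  fixes v :: "'i \<Rightarrow> 'a::real_inner"
  assumes "\<And>j. j \<in> A \<Longrightarrow> \<alpha> j \<ge> 0" and "sum \<alpha> A = 1"
    and "\<And>j. j \<in> A \<Longrightarrow> v j \<bullet> w \<ge> c"
  shows "(\<Sum>j\<in>A. \<alpha> j *\<^sub>R v j) \<bullet> w \<ge> c"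
proof -
  have "c = (\<Sum>j\<in>A. \<alpha> j * c)"
    using assms(2) by (simp add: sum_distrib_right[symmetric])
  also have "\<dots> \<le> (\<Sum>j\<in>A. \<alpha> j * (v j \<bullet> w))"
    by (rule sum_mono) (simp add: assms(1,3) mult_left_mono)
  also have "\<dots> = (\<Sum>j\<in>A. \<alpha> j *\<^sub>R v j) \<bullet> w"
    by (simp add: inner_sum_left)
  finally show ?thesis .
qed

lemma inner_ge_neg_of_incoherent:
  fixes u v :: "'a::real_inner"
  assumes "\<bar>u \<bullet> v\<bar> \<le> \<epsilon> * norm u * norm v" and "\<epsilon> \<ge> 0"
    and "norm u \<le> sqrt C" and "norm v \<le> sqrt C"
  shows "u \<bullet> v \<ge> - (\<epsilon> * C)"
proof -
  have "C \<ge> 0"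
    using assms(3) norm_ge_zero order.trans real_sqrt_ge_0_iff by blast
  have "\<epsilon> * norm u * norm v \<le> \<epsilon> * sqrt C * sqrt C"
    using assms(2-4) \<open>C \<ge> 0\<close> by (intro mult_mono) (auto intro: mult_left_mono)
  with \<open>C \<ge> 0\<close> assms(1) show ?thesis
    by (simp add: mult.assoc abs_le_iff)
qed

lemma norm_diff_power2_le:
  fixes s t :: "'a::real_inner"
  assumes "norm s ^ 2 \<le> C" and "norm t ^ 2 \<le> C" and "s \<bullet> t \<ge> - (\<epsilon> * C)"
  shows "norm (s - t) ^ 2 \<le> 2 * C * (1 + \<epsilon>)"
proof -
  have "norm (s - t) ^ 2 = norm s ^ 2 - 2 * (s \<bullet> t) + norm t ^ 2"
    by (simp add: power2_norm_eq_inner inner_diff_left inner_diff_right inner_commute)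
  with assms show ?thesis
    by (simp add: algebra_simps)
qed

lemma loss_gap_le_of_local_smooth_stationary:
  fixes x \<theta> g :: "'a::real_inner"
  assumes "\<bar>f x - f \<theta> - (x - \<theta>) \<bullet> g\<bar> \<le> L / 2 * norm (x - \<theta>) ^ 2" and "g = 0"
  shows "f x - f \<theta> \<le> L / 2 * norm (x - \<theta>) ^ 2"
  using assms abs_ge_self[of "f x - f \<theta>"] by simp

theorem mainTheorem4:
  fixes \<theta>0 :: "'a::euclidean_space"
    and \<theta> :: "nat \<Rightarrow> 'a"
    and \<L> :: "nat \<Rightarrow> 'a \<Rightarrow> real"
    and grad :: "nat \<Rightarrow> 'a \<Rightarrow> 'a"
    and Lsm :: "nat \<Rightarrow> real"
    and \<alpha> :: "nat \<Rightarrow> real"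
    and T :: nat and C r \<epsilon> :: real
  assumes diff: "\<And>i x. i \<in> {1..T} \<Longrightarrow> (\<L> i has_derivative (\<lambda>h. grad i x \<bullet> h)) (at x)"
    and stat: "\<And>i. i \<in> {1..T} \<Longrightarrow> grad i (\<theta> i) = 0"
    and C_pos: "C > 0"
    and tau_bd: "\<And>i. i \<in> {1..T} \<Longrightarrow> norm (\<theta> i - \<theta>0) ^ 2 \<le> C"
    and r_pos: "r > 0"
    and r_ge: "r \<ge> 2 * sqrt C"
    and Lsm_nn: "\<And>i. i \<in> {1..T} \<Longrightarrow> Lsm i \<ge> 0"
    and smooth: "\<And>i x. i \<in> {1..T} \<Longrightarrow> norm (x - \<theta> i) \<le> r \<Longrightarrow>
        \<bar>\<L> i x - \<L> i (\<theta> i) - (x - \<theta> i) \<bullet> grad i (\<theta> i)\<bar> \<le> Lsm i / 2 * norm (x - \<theta> i) ^ 2"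
    and eps_pos: "0 < \<epsilon>" and eps_le: "\<epsilon> \<le> 1"
    and incoh: "\<And>i j. i \<in> {1..T} \<Longrightarrow> j \<in> {1..T} \<Longrightarrow> i \<noteq> j \<Longrightarrow>
        \<bar>(\<theta> i - \<theta>0) \<bullet> (\<theta> j - \<theta>0)\<bar> \<le> \<epsilon> * norm (\<theta> i - \<theta>0) * norm (\<theta> j - \<theta>0)"
    and alpha_nn: "\<And>i. i \<in> {1..T} \<Longrightarrow> \<alpha> i \<ge> 0"
    and alpha_sum: "(\<Sum>i=1..T. \<alpha> i) = 1"
  shows "\<forall>i \<in> {1..T}.
    \<L> i (\<theta>0 + (\<Sum>j=1..T. \<alpha> j *\<^sub>R (\<theta> j - \<theta>0))) - \<L> i (\<theta> i) \<le> Lsm i * C * (1 + \<epsilon>)"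
proof
  fix i assume i: "i \<in> {1..T}"
  define \<tau> where "\<tau> j = \<theta> j - \<theta>0" for j
  define s where "s = (\<Sum>j=1..T. \<alpha> j *\<^sub>R \<tau> j)"
  have \<tau>_le: "norm (\<tau> j) \<le> sqrt C" if "j \<in> {1..T}" for j
    using tau_bd[OF that] by (simp add: \<tau>_def real_le_rsqrt)
  have s_le: "norm s \<le> sqrt C"
    unfolding s_def using alpha_nn alpha_sum \<tau>_le by (rule norm_convex_combination_le)
  have "s \<bullet> \<tau> i \<ge> - (\<epsilon> * C)"
    unfolding s_def using alpha_nn alpha_sum
  proof (rule inner_convex_combination_ge)
    fix j assume j: "j \<in> {1..T}"
    show "\<tau> j \<bullet> \<tau> i \<ge> - (\<epsilon> * C)"
    proof (cases "j = i")
      case True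
      have "- (\<epsilon> * C) \<le> 0" using eps_pos C_pos by simp
      with True inner_ge_zero[of "\<tau> i"] show ?thesis by (metis order.trans)
    next
      case False
      with incoh[OF j i] eps_pos \<tau>_le[OF j] \<tau>_le[OF i] show ?thesis
        by (intro inner_ge_neg_of_incoherent) (simp_all add: \<tau>_def)
    qed
  qed
  moreover have "norm s ^ 2 \<le> C"
    using s_le C_pos by (metis norm_ge_zero power_mono real_sqrt_pow2 less_imp_le)
  ultimately have gap_sq: "norm (s - \<tau> i) ^ 2 \<le> 2 * C * (1 + \<epsilon>)"
    using tau_bd[OF i] by (intro norm_diff_power2_le) (simp_all add: \<tau>_def)
  have displacement: "\<theta>0 + s - \<theta> i = s - \<tau> i"
    by (simp add: \<tau>_def)
  have "norm (s - \<tau> i) \<le> r"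
    using norm_triangle_ineq4[of s "\<tau> i"] s_le \<tau>_le[OF i] r_ge by linarith
  then have "\<L> i (\<theta>0 + s) - \<L> i (\<theta> i) \<le> Lsm i / 2 * norm (s - \<tau> i) ^ 2"
    using smooth[OF i] stat[OF i] displacement
    by (metis loss_gap_le_of_local_smooth_stationary)
  also have "\<dots> \<le> Lsm i * C * (1 + \<epsilon>)"
    using mult_left_mono[OF gap_sq, of "Lsm i / 2"] Lsm_nn[OF i] by simp
  finally show "\<L> i (\<theta>0 + (\<Sum>j=1..T. \<alpha> j *\<^sub>R (\<theta> j - \<theta>0))) - \<L> i (\<theta> i) \<le> Lsm i * C * (1 + \<epsilon>)"
    by (simp add: s_def \<tau>_def)
qed

end
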